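(* Let $K\ge1$, let $\pi$ be a probability distribution on $\mathbb{X}$ and $\tau(\mathrm{d}h\mid x)$ hold-time distributions on $(0,\infty)$ with survival function $\bar F_\tau(h\mid x)$, such that $H>\epsilon$ almost surely under each $\tau(\cdot\mid x)$ for a fixed $\epsilon>0$ and $\sup_x\mathbb{E}_\tau[H\mid x]<\infty$. Let $(X^{1:K+1},L)$ be distributed according to \[ A(\mathrm{d}x^{1:K+1},\mathrm{d}l)=\frac{\bar F_{\tau}(l\mid x^{K+1})}{\mathbb{E}_{\tau}[H]}\,\mathrm{d}l\prod_{k=1}^{K+1}\pi(\mathrm{d}x^{k}),\qquad l\ge0, \] with $\mathbb{E}_{\tau}[H]=\int\mathbb{E}_{\tau}[H\mid x]\pi(\mathrm{d}x)$. Then the conditional distribution of $X^{1:K+1}$ given $L<\epsilon$ is $\Pi(\mathrm{d}x^{1:K+1})=\prod_{k=1}^{K+1}\pi(\mathrm{d}x^k)$.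
   Context: $A$ is the stationary distribution of the real-time Markov jump process of $K+1$ Markov chains (each with invariant distribution $\pi$) simulated serially on one processor, where the chain being simulated has state $x^{K+1}$, a transition from state $x$ takes real time distributed as $\tau(\cdot\mid x)$, states are rotated after each transition, and $L$ is the time elapsed since the last transition. *)

theory Defs
  imports "HOL-Probability.Probability"
begin

definition surv :: "('a \<Rightarrow> real measure) \<Rightarrow> 'a \<Rightarrow> real \<Rightarrow> real" where
  "surv \<tau> x h = measure (\<tau> x) {h'. h' > h}"

definition mean_hold :: "'a measure \<Rightarrow> ('a \<Rightarrow> real measure) \<Rightarrow> ennreal" where
  "mean_hold \<pi> \<tau> = (\<integral>\<^sup>+ x. (\<integral>\<^sup>+ h. ennreal h \<partial>\<tau> x) \<partial>\<pi>)"

definition Pi_target :: "'a measure \<Rightarrow> nat \<Rightarrow> (nat \<Rightarrow> 'a) measure" where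
  "Pi_target \<pi> K = PiM {1..K+1} (\<lambda>_. \<pi>)"

definition A_meas :: "'a measure \<Rightarrow> ('a \<Rightarrow> real measure) \<Rightarrow> nat \<Rightarrow> ((nat \<Rightarrow> 'a) \<times> real) measure" where
  "A_meas \<pi> \<tau> K = density (Pi_target \<pi> K \<Otimes>\<^sub>M lborel)
     (\<lambda>(xs, l). indicator {0..} l * ennreal (surv \<tau> (xs (K+1)) l) / mean_hold \<pi> \<tau>)"

end

theory Submission
  imports Defs
begin

text \<open>Since every hold time exceeds \<open>\<epsilon>\<close>, the survival function equals 1 on \<open>[0, \<epsilon>)\<close>.
  Hence on \<open>S \<times> {..<\<epsilon>}\<close> the density of \<open>A\<close> is the constant \<open>1 / E\<^sub>\<tau>[H]\<close>, so
  \<open>A(S \<times> {..<\<epsilon>}) = \<Pi>(S) \<epsilon> / E\<^sub>\<tau>[H]\<close>, and normalising by \<open>S = space \<Pi>\<close> leaves \<open>\<Pi>(S)\<close>.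
  The moment bounds make \<open>E\<^sub>\<tau>[H]\<close> finite and at least \<open>\<epsilon>\<close>, so the normalisation is legitimate.\<close>

lemma prob_algebra_kernelD:
  assumes "\<kappa> \<in> M \<rightarrow>\<^sub>M prob_algebra N" "x \<in> space M"
  shows "prob_space (\<kappa> x)" "sets (\<kappa> x) = sets N"
  using measurable_space[OF assms] by (simp_all add: space_prob_algebra)

lemma prob_space_Pi_target: "prob_space \<pi> \<Longrightarrow> prob_space (Pi_target \<pi> K)"
  unfolding Pi_target_def by (intro prob_space_PiM) auto

lemma measurable_surv:
  assumes f: "f \<in> M \<rightarrow>\<^sub>M N" and \<tau>: "\<tau> \<in> N \<rightarrow>\<^sub>M prob_algebra borel"
    and g: "g \<in> borel_measurable M"
  shows "(\<lambda>z. surv \<tau> (f z) (g z)) \<in> borel_measurable M"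
proof -
  have "(SIGMA z:space M. {h. g z < h}) = {w \<in> space (M \<Otimes>\<^sub>M borel). g (fst w) < snd w}"
    by (auto simp: space_pair_measure)
  also have "\<dots> \<in> sets (M \<Otimes>\<^sub>M borel)"
    using g by measurable
  finally show ?thesis
    unfolding surv_def
    by (rule measure_measurable_prob_algebra2) (rule measurable_compose[OF f \<tau>])
qed

lemma surv_eq_1_below:
  assumes "prob_space (\<tau> x)" "sets (\<tau> x) = sets borel"
    and "AE h in \<tau> x. \<epsilon> < h" "l \<le> \<epsilon>"
  shows "surv \<tau> x l = 1"
proof -
  interpret prob_space "\<tau> x" by fact
  have "space (\<tau> x) = UNIV"
    using sets_eq_imp_space_eq[OF assms(2)] by simp
  moreover have "AE h in \<tau> x. l < h"
    using assms(3) by eventually_elim (use assms(4) in auto)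
  ultimately show ?thesis
    unfolding surv_def using prob_Collect_eq_1[of "\<lambda>h. l < h"] assms(2) by simp
qed

lemma mean_hold_ge:
  assumes "prob_space \<pi>" "\<tau> \<in> \<pi> \<rightarrow>\<^sub>M prob_algebra borel"
    and "\<forall>x\<in>space \<pi>. AE h in \<tau> x. \<epsilon> < h"
  shows "ennreal \<epsilon> \<le> mean_hold \<pi> \<tau>"
proof -
  have "ennreal \<epsilon> \<le> (\<integral>\<^sup>+ h. ennreal h \<partial>\<tau> x)" if x: "x \<in> space \<pi>" for x
  proof -
    interpret prob_space "\<tau> x"
      using prob_algebra_kernelD[OF assms(2) x] by blast
    have "AE h in \<tau> x. \<epsilon> < h"
      using assms(3) x by blast
    then have "AE h in \<tau> x. ennreal \<epsilon> \<le> ennreal h"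
      by eventually_elim (simp add: ennreal_leI)
    then have "(\<integral>\<^sup>+ h. ennreal \<epsilon> \<partial>\<tau> x) \<le> (\<integral>\<^sup>+ h. ennreal h \<partial>\<tau> x)"
      by (rule nn_integral_mono_AE)
    then show ?thesis
      by (simp add: emeasure_space_1)
  qed
  then have "(\<integral>\<^sup>+ x. ennreal \<epsilon> \<partial>\<pi>) \<le> mean_hold \<pi> \<tau>"
    unfolding mean_hold_def by (intro nn_integral_mono) auto
  then show ?thesis
    by (simp add: prob_space.emeasure_space_1[OF assms(1)])
qed

lemma mean_hold_le_SUP:
  assumes "prob_space \<pi>"
  shows "mean_hold \<pi> \<tau> \<le> (SUP x\<in>space \<pi>. \<integral>\<^sup>+ h. ennreal h \<partial>\<tau> x)"
proof -
  have "mean_hold \<pi> \<tau> \<le> (\<integral>\<^sup>+ x. (SUP x\<in>space \<pi>. \<integral>\<^sup>+ h. ennreal h \<partial>\<tau> x) \<partial>\<pi>)"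
    unfolding mean_hold_def by (intro nn_integral_mono SUP_upper) auto
  then show ?thesis
    by (simp add: prob_space.emeasure_space_1[OF assms])
qed

lemma emeasure_A_meas_below:
  assumes "prob_space \<pi>" and \<tau>: "\<tau> \<in> \<pi> \<rightarrow>\<^sub>M prob_algebra borel"
    and AE: "\<forall>x\<in>space \<pi>. AE h in \<tau> x. \<epsilon> < h"
    and S: "S \<in> sets (Pi_target \<pi> K)"
  shows "emeasure (A_meas \<pi> \<tau> K) (S \<times> {..<\<epsilon>})
    = emeasure (Pi_target \<pi> K) S * ennreal \<epsilon> / mean_hold \<pi> \<tau>"
proof -
  let ?P = "Pi_target \<pi> K"
  have last_coord: "(\<lambda>z. fst z (K+1)) \<in> ?P \<Otimes>\<^sub>M lborel \<rightarrow>\<^sub>M \<pi>"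
    unfolding Pi_target_def by measurable
  have "(\<lambda>z. surv \<tau> (fst z (K+1)) (snd z)) \<in> borel_measurable (?P \<Otimes>\<^sub>M lborel)"
    by (intro measurable_surv[OF last_coord \<tau>]) measurable
  then have [measurable]: "(\<lambda>(xs, l). surv \<tau> (xs (K+1)) l) \<in> borel_measurable (?P \<Otimes>\<^sub>M lborel)"
    by (simp add: case_prod_beta')
  have density_on_S: "(\<lambda>(xs, l). indicator {0..} l * ennreal (surv \<tau> (xs (K+1)) l) / mean_hold \<pi> \<tau>) z
      * indicator (S \<times> {..<\<epsilon>}) z = indicator (S \<times> {0..<\<epsilon>}) z / mean_hold \<pi> \<tau>" for z
  proof (cases z)
    case z: (Pair xs l)
    show ?thesis
    proof (cases "xs \<in> S \<and> 0 \<le> l \<and> l < \<epsilon>")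
      case True
      then have "xs \<in> space ?P"
        using sets.sets_into_space[OF S] by blast
      then have x: "xs (K+1) \<in> space \<pi>"
        unfolding Pi_target_def space_PiM by (rule PiE_mem) simp
      have "surv \<tau> (xs (K+1)) l = 1"
        using True prob_algebra_kernelD[OF \<tau> x] AE x by (intro surv_eq_1_below[where \<epsilon> = \<epsilon>]) simp_all
      with True show ?thesis
        by (simp add: z)
    next
      case False
      then show ?thesis
        by (auto simp: z indicator_def)
    qed
  qed
  have "emeasure (A_meas \<pi> \<tau> K) (S \<times> {..<\<epsilon>})
      = (\<integral>\<^sup>+ z. indicator (S \<times> {0..<\<epsilon>}) z / mean_hold \<pi> \<tau> \<partial>(?P \<Otimes>\<^sub>M lborel))"
    unfolding A_meas_def density_on_S[symmetric]
    by (rule emeasure_density) (use S in measurable)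
  also have "\<dots> = emeasure (?P \<Otimes>\<^sub>M lborel) (S \<times> {0..<\<epsilon>}) / mean_hold \<pi> \<tau>"
    using S by (simp add: nn_integral_divide)
  also have "\<dots> = emeasure ?P S * ennreal \<epsilon> / mean_hold \<pi> \<tau>"
    using S by (cases "0 \<le> \<epsilon>") (simp_all add: lborel.emeasure_pair_measure_Times ennreal_neg)
  finally show ?thesis .
qed

lemma measure_A_meas_below:
  assumes "prob_space \<pi>" "\<tau> \<in> \<pi> \<rightarrow>\<^sub>M prob_algebra borel"
    and "\<forall>x\<in>space \<pi>. AE h in \<tau> x. \<epsilon> < h"
    and c: "mean_hold \<pi> \<tau> = ennreal c" "0 < c" and "0 \<le> \<epsilon>"
    and S: "S \<in> sets (Pi_target \<pi> K)"
  shows "measure (A_meas \<pi> \<tau> K) (S \<times> {..<\<epsilon>}) = measure (Pi_target \<pi> K) S * \<epsilon> / c"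
proof -
  interpret P: prob_space "Pi_target \<pi> K"
    using prob_space_Pi_target[OF assms(1)] .
  have "emeasure (A_meas \<pi> \<tau> K) (S \<times> {..<\<epsilon>})
      = ennreal (measure (Pi_target \<pi> K) S) * ennreal \<epsilon> / ennreal c"
    using emeasure_A_meas_below[OF assms(1-3) S] c(1) by (simp add: P.emeasure_eq_measure)
  also have "\<dots> = ennreal (measure (Pi_target \<pi> K) S * \<epsilon> / c)"
    using c(2) \<open>0 \<le> \<epsilon>\<close> by (simp add: ennreal_mult''[symmetric] divide_ennreal)
  finally show ?thesis
    using c(2) \<open>0 \<le> \<epsilon>\<close> by (simp add: measure_def)
qed

theorem corollary7:
  fixes \<pi> :: "'a measure" and \<tau> :: "'a \<Rightarrow> real measure" and K :: nat and \<epsilon> :: real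
  assumes "K \<ge> 1"
    and "prob_space \<pi>"
    and "\<tau> \<in> \<pi> \<rightarrow>\<^sub>M prob_algebra borel"
    and "\<epsilon> > 0"
    and "\<forall>x\<in>space \<pi>. AE h in \<tau> x. h > \<epsilon>"
    and "(SUP x\<in>space \<pi>. \<integral>\<^sup>+ h. ennreal h \<partial>\<tau> x) < \<infinity>"
  shows "measure (A_meas \<pi> \<tau> K) (space (Pi_target \<pi> K) \<times> {..<\<epsilon>}) > 0
    \<and> (\<forall>S \<in> sets (Pi_target \<pi> K).
         measure (A_meas \<pi> \<tau> K) (S \<times> {..<\<epsilon>}) / measure (A_meas \<pi> \<tau> K) (space (Pi_target \<pi> K) \<times> {..<\<epsilon>})
         = measure (Pi_target \<pi> K) S)"
proof -
  have AE: "\<forall>x\<in>space \<pi>. AE h in \<tau> x. \<epsilon> < h"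
    using assms(5) by simp
  have "ennreal \<epsilon> \<le> mean_hold \<pi> \<tau>"
    using mean_hold_ge[OF assms(2,3) AE] .
  moreover have "mean_hold \<pi> \<tau> < \<infinity>"
    using le_less_trans[OF mean_hold_le_SUP[OF assms(2)] assms(6)] .
  ultimately obtain c where c: "mean_hold \<pi> \<tau> = ennreal c" "\<epsilon> \<le> c"
    using assms(4) by (cases "mean_hold \<pi> \<tau>") (auto simp: ennreal_le_iff)
  note measure_A = measure_A_meas_below[OF assms(2,3) AE c(1) _ less_imp_le[OF assms(4)]]
  have "measure (A_meas \<pi> \<tau> K) (space (Pi_target \<pi> K) \<times> {..<\<epsilon>}) = \<epsilon> / c"
    using measure_A[OF _ sets.top] assms(4) c(2)
    by (simp add: prob_space.prob_space[OF prob_space_Pi_target[OF assms(2)]])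
  then show ?thesis
    using measure_A assms(4) c(2) by simp
qed

end
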